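(* Let $A,B$ be $2\times 2$ constant Hermitian positive definite matrices. Then $H_{A,B}$ has an eigenfunction of the form $\Phi(x)=(\tilde a\,\phi^\alpha_n(x),\ \tilde b\,\phi^\beta_m(x))^{t}$ with $\tilde a,\tilde b\in\mathbb{C}$ not both zero, $\alpha,\beta>0$ and $m,n\in\{0,1,2,\dots\}$, if and only if $AB=BA$. In particular, when $AB\neq BA$, no nonzero function of the form $v_0\phi^\alpha_0+v_1\phi_1^\alpha$ ($v_0,v_1\in\mathbb{C}^2$, $\alpha>0$) is an eigenfunction of $H_{A,B}$.
   Context: $H_{A,B}:=B(-\partial_x^2)+Ax^2$ on $L^2(\mathbb{R};\mathbb{C}^2)$, self-adjoint on the domain of pairs of functions in $H^2(\mathbb{R})\cap\{f:\int|x^2f|^2<\infty\}$. For $\alpha>0$, $n\ge0$: $\phi^\alpha_n(x)=\alpha^{1/4}h_n(\alpha^{1/2}x)e^{-\alpha x^2/2}/\sqrt{2^nn!\sqrt\pi}$, with $h_n(x)=(-1)^ne^{x^2}\partial_x^n[e^{-x^2}]$ the Hermite polynomials; these are the normalized eigenfunctions of $-\partial_x^2+\alpha^2x^2$. *)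

theory Defs
  imports "HOL-Analysis.Analysis"
begin

definition hermitian_mat :: "complex^2^2 \<Rightarrow> bool" where
  "hermitian_mat A \<longleftrightarrow> (\<forall>i j. A $ i $ j = cnj (A $ j $ i))"

definition quad_form :: "complex^2^2 \<Rightarrow> complex^2 \<Rightarrow> complex" where
  "quad_form A v = (\<Sum>i\<in>UNIV. cnj (v $ i) * (A *v v) $ i)"

definition pos_def_mat :: "complex^2^2 \<Rightarrow> bool" where
  "pos_def_mat A \<longleftrightarrow> hermitian_mat A \<and> (\<forall>v. v \<noteq> 0 \<longrightarrow> 0 < Re (quad_form A v))"

definition hermite :: "nat \<Rightarrow> real \<Rightarrow> real" where
  "hermite n x = (-1) ^ n * exp (x^2) * (deriv ^^ n) (\<lambda>t. exp (- (t^2))) x"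

text \<open>Normalized eigenfunctions of -d^2/dx^2 + alpha^2 x^2.\<close>
definition hermite_fn :: "real \<Rightarrow> nat \<Rightarrow> real \<Rightarrow> real" where
  "hermite_fn \<alpha> n x = \<alpha> powr (1/4) * hermite n (sqrt \<alpha> * x) * exp (- \<alpha> * x^2 / 2)
      / sqrt (2 ^ n * fact n * sqrt pi)"

definition H_op :: "complex^2^2 \<Rightarrow> complex^2^2 \<Rightarrow> (real \<Rightarrow> complex^2) \<Rightarrow> real \<Rightarrow> complex^2" where
  "H_op A B \<Phi> x = B *v (- vector_derivative (\<lambda>t. vector_derivative \<Phi> (at t)) (at x))
                    + complex_of_real (x^2) *s (A *v \<Phi> x)"

definition eigenfunction_H :: "complex^2^2 \<Rightarrow> complex^2^2 \<Rightarrow> (real \<Rightarrow> complex^2) \<Rightarrow> bool" where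
  "eigenfunction_H A B \<Phi> \<longleftrightarrow>
     \<Phi> \<noteq> (\<lambda>x. 0) \<and>
     (\<forall>x. \<Phi> differentiable (at x)) \<and>
     (\<forall>x. (\<lambda>t. vector_derivative \<Phi> (at t)) differentiable (at x)) \<and>
     (\<exists>\<mu>::complex. \<forall>x. H_op A B \<Phi> x = \<mu> *s \<Phi> x)"

end

theory Submission
  imports Defs "HOL-Computational_Algebra.Polynomial" "HOL-Real_Asymp.Real_Asymp"
begin

(*
  Write \<phi>\<^sup>\<alpha>\<^sub>n(x) = c p\<^sub>n(sqrt \<alpha> x) exp(-\<alpha> x^2/2) with the Hermite polynomial p\<^sub>n of degree n. The
  oscillator equation -\<phi>'' + \<alpha>^2 x^2 \<phi> = (2n+1) \<alpha> \<phi> turns H\<^sub>A\<^sub>,\<^sub>B \<Phi> = \<mu> \<Phi> for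
  \<Phi> = \<phi>\<^sup>\<alpha>\<^sub>n u + \<phi>\<^sup>\<beta>\<^sub>m v into
    \<phi>\<^sup>\<alpha>\<^sub>n (c\<^sub>0(u) + x^2 c\<^sub>2(u)) + \<phi>\<^sup>\<beta>\<^sub>m (c\<^sub>0(v) + x^2 c\<^sub>2(v)) = 0,
  where c\<^sub>0(u) = (2n+1) \<alpha> B u - \<mu> u and c\<^sub>2(u) = A u - \<alpha>^2 B u.
  Polynomials times Gaussians of different widths are linearly independent, and for equal widths
  comparing degrees of the polynomial factors separates the coefficients. So A and B acquire a common
  eigenvector: either some w \<noteq> 0 has c\<^sub>0(w) = c\<^sub>2(w) = 0, or (for the diagonal ansatz) the
  off-diagonal entries of A and B vanish. For 2 x 2 Hermitian matrices a common eigenvector w makes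
  its orthogonal complement a common eigenvector too, so A B = B A.
  Conversely, commuting positive definite A and B have a common eigenvector w with A w = a w,
  B w = b w and a, b > 0, and \<phi>\<^sup>\<alpha>\<^sub>0 w with \<alpha> = sqrt (a / b) is an eigenfunction.
*)

section \<open>Hermite polynomials and Hermite functions\<close>

fun hermite_poly :: "nat \<Rightarrow> real poly" where
  "hermite_poly 0 = 1"
| hermite_poly_Suc: "hermite_poly (Suc n) = [:0, 2:] * hermite_poly n - pderiv (hermite_poly n)"

declare hermite_poly_Suc [simp del]

lemma pderiv_hermite_poly_Suc:
  "pderiv (hermite_poly (Suc n)) = smult (2 * real (Suc n)) (hermite_poly n)"
proof (induction n)
  case 0
  then show ?case by (simp add: pderiv_pCons hermite_poly_Suc)
next
  case (Suc n)
  have "pderiv (hermite_poly (Suc (Suc n)))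
      = smult 2 (hermite_poly (Suc n)) + [:0, 2:] * smult (2 * real (Suc n)) (hermite_poly n)
        - smult (2 * real (Suc n)) (pderiv (hermite_poly n))"
    by (simp add: hermite_poly_Suc [of "Suc n"] pderiv_diff pderiv_mult pderiv_pCons Suc pderiv_smult)
  also have "\<dots> = smult (2 * real (Suc (Suc n))) (hermite_poly (Suc n))"
    by (simp add: hermite_poly_Suc [of n] algebra_simps smult_diff_right smult_add_left [symmetric])
  finally show ?case .
qed

lemma hermite_poly_ode:
  "pderiv (pderiv (hermite_poly n))
     = [:0, 2:] * pderiv (hermite_poly n) - smult (2 * real n) (hermite_poly n)"
proof -
  have "pderiv (hermite_poly (Suc n))
      = smult 2 (hermite_poly n) + [:0, 2:] * pderiv (hermite_poly n) - pderiv (pderiv (hermite_poly n))"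
    by (simp add: hermite_poly_Suc pderiv_diff pderiv_mult pderiv_pCons pderiv_smult)
  then show ?thesis by (simp add: pderiv_hermite_poly_Suc algebra_simps smult_add_left)
qed

lemma degree_hermite_poly [simp]: "degree (hermite_poly n) = n"
proof (induction n)
  case (Suc n)
  have "hermite_poly n \<noteq> 0"
    using Suc by (cases n) (simp, metis degree_0 nat.distinct(1))
  then have "degree ([:0, 2:] * hermite_poly n) = Suc n"
    using Suc by (simp add: degree_mult_eq)
  moreover have "degree (pderiv (hermite_poly n)) < Suc n"
    using Suc by (simp add: degree_pderiv)
  ultimately show ?case
    using degree_add_eq_left [of "- pderiv (hermite_poly n)" "[:0, 2:] * hermite_poly n"]
    by (simp add: hermite_poly_Suc)
qed simp

lemma hermite_poly_nonzero [simp]: "hermite_poly n \<noteq> 0"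
  by (cases n) (simp, metis degree_0 degree_hermite_poly nat.distinct(1))

lemma higher_deriv_gaussian:
  "(deriv ^^ n) (\<lambda>t. exp (- (t^2))) = (\<lambda>t. (-1)^n * poly (hermite_poly n) t * exp (- (t^2)))"
proof (induction n)
  case (Suc n)
  have "((\<lambda>t. (-1)^n * poly (hermite_poly n) t * exp (- (t^2))) has_real_derivative
          (-1)^Suc n * poly (hermite_poly (Suc n)) t * exp (- (t^2))) (at t)" for t
    by (auto intro!: derivative_eq_intros simp: hermite_poly_Suc algebra_simps)
  then show ?case
    using Suc by (auto intro: DERIV_imp_deriv)
qed simp

lemma hermite_eq_poly: "hermite n x = poly (hermite_poly n) x"
  unfolding hermite_def higher_deriv_gaussian
  by (simp add: exp_minus field_simps flip: power_mult_distrib)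

definition hermite_norm :: "real \<Rightarrow> nat \<Rightarrow> real" where
  "hermite_norm \<alpha> n = \<alpha> powr (1/4) / sqrt (2 ^ n * fact n * sqrt pi)"

lemma hermite_norm_pos: "\<alpha> > 0 \<Longrightarrow> hermite_norm \<alpha> n > 0"
  by (simp add: hermite_norm_def)

lemma hermite_fn_eq:
  "hermite_fn \<alpha> n x = hermite_norm \<alpha> n * poly (hermite_poly n) (sqrt \<alpha> * x) * exp (- \<alpha> * x^2 / 2)"
  by (simp add: hermite_fn_def hermite_norm_def hermite_eq_poly)

definition hermite_fn_deriv :: "real \<Rightarrow> nat \<Rightarrow> real \<Rightarrow> real" where
  "hermite_fn_deriv \<alpha> n x = hermite_norm \<alpha> n
     * (sqrt \<alpha> * poly (pderiv (hermite_poly n)) (sqrt \<alpha> * x) - \<alpha> * x * poly (hermite_poly n) (sqrt \<alpha> * x))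
     * exp (- \<alpha> * x^2 / 2)"

lemma has_real_derivative_hermite_fn:
  "(hermite_fn \<alpha> n has_real_derivative hermite_fn_deriv \<alpha> n x) (at x)"
  unfolding hermite_fn_eq [abs_def] hermite_fn_deriv_def
  by (auto intro!: derivative_eq_intros simp: algebra_simps)

lemma has_real_derivative_hermite_fn_deriv:
  assumes "\<alpha> > 0"
  shows "(hermite_fn_deriv \<alpha> n has_real_derivative
           (\<alpha>^2 * x^2 - (2 * real n + 1) * \<alpha>) * hermite_fn \<alpha> n x) (at x)"
proof -
  define s where "s = sqrt \<alpha>"
  have \<alpha>: "\<alpha> = s * s"
    using assms by (simp add: s_def)
  have ode: "poly (pderiv (pderiv (hermite_poly n))) (s * x)
      = 2 * (s * x) * poly (pderiv (hermite_poly n)) (s * x) - 2 * real n * poly (hermite_poly n) (s * x)"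
    by (simp add: hermite_poly_ode)
  show ?thesis
    unfolding hermite_fn_deriv_def [abs_def] hermite_fn_eq s_def [symmetric]
    by (auto intro!: derivative_eq_intros simp: ode) (simp add: \<alpha> algebra_simps power2_eq_square)
qed

section \<open>Polynomials times Gaussians\<close>

lemma poly_eq_0_if_vanishes_on_reals:
  fixes p :: "complex poly"
  assumes "\<And>x::real. poly p (of_real x) = 0"
  shows "p = 0"
proof (rule ccontr)
  assume "p \<noteq> 0"
  then have "finite {z. poly p z = 0}"
    by (rule poly_roots_finite)
  moreover have "range complex_of_real \<subseteq> {z. poly p z = 0}"
    using assms by auto
  ultimately show False
    using finite_imageD [of complex_of_real UNIV] inj_of_real infinite_UNIV_char_0
    by (metis finite_subset)
qed

lemma poly_times_gaussian_tendsto_0: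
  fixes q :: "complex poly"
  assumes "c > 0"
  shows "((\<lambda>x::real. poly q (of_real x) * of_real (exp (- c * x^2))) \<longlongrightarrow> 0) at_top"
  using assms
proof (induction q arbitrary: c)
  case (pCons a q)
  have split: "poly (pCons a q) (of_real x) * of_real (exp (- c * x^2))
      = a * of_real (exp (- c * x^2))
        + of_real (x * exp (- (c/2) * x^2)) * (poly q (of_real x) * of_real (exp (- (c/2) * x^2)))" for x
    by (simp add: algebra_simps flip: of_real_mult exp_add)
  have "((\<lambda>x::real. exp (- c * x^2)) \<longlongrightarrow> 0) at_top"
       "((\<lambda>x::real. x * exp (- (c/2) * x^2)) \<longlongrightarrow> 0) at_top"
    using pCons.prems by real_asymp+
  then have gaussian: "((\<lambda>x::real. complex_of_real (exp (- c * x^2))) \<longlongrightarrow> 0) at_top"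
       and x_gaussian: "((\<lambda>x::real. complex_of_real (x * exp (- (c/2) * x^2))) \<longlongrightarrow> 0) at_top"
    by (auto dest: tendsto_of_real [where 'a = complex])
  have "((\<lambda>x::real. poly q (of_real x) * of_real (exp (- (c/2) * x^2))) \<longlongrightarrow> 0) at_top"
    using pCons.IH [of "c/2"] pCons.prems by simp
  then show ?case
    unfolding split
    by (rule tendsto_add_zero [OF tendsto_mult_right_zero [OF gaussian] tendsto_mult_zero [OF x_gaussian]])
qed simp

lemma poly_of_real_tendsto_0_imp_eq_0:
  fixes p :: "complex poly"
  assumes "((\<lambda>x::real. poly p (of_real x)) \<longlongrightarrow> 0) at_top"
  shows "p = 0"
proof (cases "degree p = 0")
  case True
  then obtain c where "p = [:c:]"
    by (rule degree_eq_zeroE)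
  with assms have "((\<lambda>x::real. c) \<longlongrightarrow> 0) at_top"
    by simp
  then show ?thesis
    using tendsto_unique [OF trivial_limit_at_top_linorder _ tendsto_const] \<open>p = [:c:]\<close> by auto
next
  case False
  then have "filterlim (\<lambda>x::real. poly p (of_real x)) at_infinity at_top"
    using filterlim_poly_at_infinity filterlim_of_real_at_infinity filterlim_compose by blast
  then show ?thesis
    using not_tendsto_and_filterlim_at_infinity [OF trivial_limit_at_top_linorder assms] by blast
qed

lemma poly_eq_poly_times_gaussian_imp_eq_0:
  fixes P Q :: "complex poly"
  assumes "c > 0" and "\<And>x::real. poly P (of_real x) = poly Q (of_real x) * of_real (exp (- c * x^2))"
  shows "P = 0"
  using poly_times_gaussian_tendsto_0 [OF assms(1), of Q] assms(2)
  by (intro poly_of_real_tendsto_0_imp_eq_0) simp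

lemma poly_gaussian_independent:
  fixes P Q :: "complex poly"
  assumes "\<alpha> \<noteq> \<beta>"
    and "\<And>x::real. poly P (of_real x) * of_real (exp (- \<alpha> * x^2 / 2))
                   + poly Q (of_real x) * of_real (exp (- \<beta> * x^2 / 2)) = 0"
  shows "P = 0 \<and> Q = 0"
  using assms
proof (induction \<alpha> \<beta> arbitrary: P Q rule: linorder_wlog)
  case (le \<alpha> \<beta>)
  then have "\<alpha> < \<beta>" by simp
  have "poly P (of_real x) = poly (- Q) (of_real x) * of_real (exp (- ((\<beta> - \<alpha>) / 2) * x^2))" for x
  proof -
    have "of_real (exp (- \<alpha> * x^2 / 2))
        * (poly P (of_real x) + poly Q (of_real x) * of_real (exp (- ((\<beta> - \<alpha>) / 2) * x^2))) = 0"
      using le.prems(2) [of x] by (simp add: algebra_simps diff_divide_distrib flip: of_real_mult exp_add)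
    then show ?thesis
      by (simp add: add_eq_0_iff)
  qed
  then have "P = 0"
    using \<open>\<alpha> < \<beta>\<close> by (intro poly_eq_poly_times_gaussian_imp_eq_0 [of "(\<beta> - \<alpha>) / 2" _ "- Q"]) auto
  moreover have "Q = 0"
    using le.prems(2) \<open>P = 0\<close> by (intro poly_eq_0_if_vanishes_on_reals) simp
  ultimately show ?case ..
next
  case (sym \<alpha> \<beta>)
  then show ?case
    by (metis add.commute)
qed

section \<open>Quadratic multiples of Hermite functions\<close>

lemma poly_map_poly_of_real: "poly (map_poly of_real p) (of_real x) = of_real (poly p x)"
  by (induction p) (auto simp: map_poly_pCons)

definition hermite_fn_poly :: "real \<Rightarrow> nat \<Rightarrow> complex poly" where
  "hermite_fn_poly \<alpha> n =
     smult (of_real (hermite_norm \<alpha> n)) (map_poly of_real (hermite_poly n \<circ>\<^sub>p [:0, sqrt \<alpha>:]))"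

lemma of_real_hermite_fn:
  "complex_of_real (hermite_fn \<alpha> n x)
     = poly (hermite_fn_poly \<alpha> n) (of_real x) * of_real (exp (- \<alpha> * x^2 / 2))"
  by (simp add: hermite_fn_poly_def hermite_fn_eq poly_map_poly_of_real poly_pcompose mult.commute)

lemma degree_hermite_fn_poly:
  assumes "\<alpha> > 0"
  shows "degree (hermite_fn_poly \<alpha> n) = n"
  using assms hermite_norm_pos [OF assms, of n]
  by (simp add: hermite_fn_poly_def degree_map_poly degree_pcompose)

lemma hermite_fn_poly_nonzero:
  assumes "\<alpha> > 0"
  shows "hermite_fn_poly \<alpha> n \<noteq> 0"
  using assms hermite_norm_pos [OF assms, of n]
  by (simp add: hermite_fn_poly_def map_poly_eq_0_iff pcompose_eq_0_iff)

lemma hermite_fn_quadratic_component: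
  fixes p0 p2 :: "complex^'n"
  shows "(hermite_fn \<alpha> n x *\<^sub>R (p0 + x^2 *\<^sub>R p2)) $ i
    = poly ([:p0 $ i, 0, p2 $ i:] * hermite_fn_poly \<alpha> n) (of_real x) * of_real (exp (- \<alpha> * x^2 / 2))"
  unfolding vector_scaleR_component vector_add_component
  by (simp add: scaleR_conv_of_real of_real_hermite_fn algebra_simps power2_eq_square)

lemma degree_quadratic_mult:
  fixes H :: "'a::idom poly"
  assumes "p2 \<noteq> 0" "H \<noteq> 0"
  shows "degree ([:p0, 0, p2:] * H) = degree H + 2"
  using assms by (simp add: degree_mult_eq del: mult_pCons_left)

lemma quadratic_mult_eq_0_iff:
  fixes H :: "'a::idom poly"
  assumes "H \<noteq> 0"
  shows "[:p0, 0, p2:] * H = 0 \<longleftrightarrow> p0 = 0 \<and> p2 = 0"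
  using assms by (simp del: mult_pCons_left)

lemma quadratic_mults_sum_eq_0:
  fixes H1 H2 :: "'a::idom poly"
  assumes "H1 \<noteq> 0" and "degree H1 < degree H2"
    and sum: "[:p0, 0, p2:] * H1 + [:q0, 0, q2:] * H2 = 0"
  shows "q2 = 0" and "p2 = 0 \<Longrightarrow> p0 = 0 \<and> q0 = 0" and "p2 \<noteq> 0 \<Longrightarrow> degree H2 = degree H1 + 2"
proof -
  have "H2 \<noteq> 0"
    using assms(2) by auto
  have lhs: "[:p0, 0, p2:] * H1 = - ([:q0, 0, q2:] * H2)"
    using sum by (simp add: eq_neg_iff_add_eq_0 del: mult_pCons_left)
  have "degree [:p0, 0, p2:] \<le> 2"
    by (simp add: degree_pCons_eq_if)
  then have le: "degree ([:p0, 0, p2:] * H1) \<le> degree H1 + 2"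
    using degree_mult_le [of "[:p0, 0, p2:]" H1] by linarith
  show "q2 = 0"
  proof (rule ccontr)
    assume "q2 \<noteq> 0"
    then have "degree ([:q0, 0, q2:] * H2) = degree H2 + 2"
      using \<open>H2 \<noteq> 0\<close> by (rule degree_quadratic_mult)
    then show False
      using lhs le assms(2) by (simp del: mult_pCons_left)
  qed
  then have lhs': "[:p0, 0, p2:] * H1 = - smult q0 H2"
    using lhs by (simp add: mult_pCons_left [of q0 0] del: mult_pCons_left)
  show "p0 = 0 \<and> q0 = 0" if "p2 = 0"
  proof -
    have "smult p0 H1 = - smult q0 H2"
      using lhs' that by simp
    then have "q0 = 0"
      using assms(2) by (metis degree_minus degree_smult_eq degree_smult_le not_le)
    then show ?thesis
      using lhs' that assms(1) by (simp del: mult_pCons_left)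
  qed
  show "degree H2 = degree H1 + 2" if "p2 \<noteq> 0"
  proof -
    have "degree (- smult q0 H2) = degree H1 + 2"
      using lhs' degree_quadratic_mult [OF that assms(1), of p0] by (simp only:)
    then show ?thesis
      by (cases "q0 = 0") auto
  qed
qed

lemma hermite_quadratic_multiple_eq_0:
  fixes p0 p2 :: "complex^'n"
  assumes "\<alpha> > 0" and "\<And>x. hermite_fn \<alpha> n x *\<^sub>R (p0 + x^2 *\<^sub>R p2) = 0"
  shows "p0 = 0 \<and> p2 = 0"
proof -
  have "p0 $ i = 0 \<and> p2 $ i = 0" for i
  proof -
    have "poly ([:p0 $ i, 0, p2 $ i:] * hermite_fn_poly \<alpha> n) (of_real x) = 0" for x :: real
      using arg_cong [OF assms(2) [of x], of "\<lambda>v. v $ i"]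
      by (simp only: hermite_fn_quadratic_component zero_index) simp
    then have "[:p0 $ i, 0, p2 $ i:] * hermite_fn_poly \<alpha> n = 0"
      by (rule poly_eq_0_if_vanishes_on_reals)
    then show ?thesis
      using hermite_fn_poly_nonzero [OF assms(1)] quadratic_mult_eq_0_iff by blast
  qed
  then show ?thesis
    by (simp add: vec_eq_iff)
qed

lemma hermite_quadratic_multiples_distinct_scales:
  fixes p0 p2 q0 q2 :: "complex^'n"
  assumes "\<alpha> > 0" "\<beta> > 0" "\<alpha> \<noteq> \<beta>"
    and "\<And>x. hermite_fn \<alpha> n x *\<^sub>R (p0 + x^2 *\<^sub>R p2) + hermite_fn \<beta> m x *\<^sub>R (q0 + x^2 *\<^sub>R q2) = 0"
  shows "p0 = 0 \<and> p2 = 0 \<and> q0 = 0 \<and> q2 = 0"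
proof -
  have "p0 $ i = 0 \<and> p2 $ i = 0 \<and> q0 $ i = 0 \<and> q2 $ i = 0" for i
  proof -
    have "[:p0 $ i, 0, p2 $ i:] * hermite_fn_poly \<alpha> n = 0 \<and> [:q0 $ i, 0, q2 $ i:] * hermite_fn_poly \<beta> m = 0"
    proof (rule poly_gaussian_independent [OF assms(3)])
      show "poly ([:p0 $ i, 0, p2 $ i:] * hermite_fn_poly \<alpha> n) (of_real x) * of_real (exp (- \<alpha> * x^2 / 2))
          + poly ([:q0 $ i, 0, q2 $ i:] * hermite_fn_poly \<beta> m) (of_real x) * of_real (exp (- \<beta> * x^2 / 2))
          = 0" for x
        using arg_cong [OF assms(4) [of x], of "\<lambda>v. v $ i"]
        by (simp only: vector_add_component hermite_fn_quadratic_component zero_index)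
    qed
    then show ?thesis
      using hermite_fn_poly_nonzero assms(1,2) quadratic_mult_eq_0_iff by metis
  qed
  then show ?thesis
    by (simp add: vec_eq_iff)
qed

lemma hermite_quadratic_multiples_lower_index:
  fixes p0 p2 q0 q2 :: "complex^'n"
  assumes "\<alpha> > 0" "n < m"
    and "\<And>x. hermite_fn \<alpha> n x *\<^sub>R (p0 + x^2 *\<^sub>R p2) + hermite_fn \<alpha> m x *\<^sub>R (q0 + x^2 *\<^sub>R q2) = 0"
  shows "q2 = 0" and "p2 $ i = 0 \<Longrightarrow> p0 $ i = 0 \<and> q0 $ i = 0" and "p2 \<noteq> 0 \<Longrightarrow> m = n + 2"
proof -
  have sum: "[:p0 $ i, 0, p2 $ i:] * hermite_fn_poly \<alpha> n + [:q0 $ i, 0, q2 $ i:] * hermite_fn_poly \<alpha> m = 0" for i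
  proof (rule poly_eq_0_if_vanishes_on_reals)
    fix x :: real
    have "(poly ([:p0 $ i, 0, p2 $ i:] * hermite_fn_poly \<alpha> n) (of_real x)
        + poly ([:q0 $ i, 0, q2 $ i:] * hermite_fn_poly \<alpha> m) (of_real x)) * of_real (exp (- \<alpha> * x^2 / 2)) = 0"
      using arg_cong [OF assms(3) [of x], of "\<lambda>v. v $ i"]
      by (simp only: vector_add_component hermite_fn_quadratic_component zero_index distrib_right)
    then show "poly ([:p0 $ i, 0, p2 $ i:] * hermite_fn_poly \<alpha> n + [:q0 $ i, 0, q2 $ i:] * hermite_fn_poly \<alpha> m) (of_real x) = 0"
      by simp
  qed
  note lower = quadratic_mults_sum_eq_0 [OF hermite_fn_poly_nonzero [OF assms(1)] _ sum]
  have degrees: "degree (hermite_fn_poly \<alpha> n) < degree (hermite_fn_poly \<alpha> m)"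
    using assms(1,2) by (simp add: degree_hermite_fn_poly)
  show "q2 = 0"
    using lower(1) [OF degrees] by (simp add: vec_eq_iff)
  show "p0 $ i = 0 \<and> q0 $ i = 0" if "p2 $ i = 0"
    using lower(2) [OF degrees that] .
  show "m = n + 2" if nonzero: "p2 \<noteq> 0"
  proof -
    obtain i where "p2 $ i \<noteq> 0"
      using nonzero by (metis vec_eq_iff zero_index)
    then show ?thesis
      using lower(3) [OF degrees] assms(1) by (simp add: degree_hermite_fn_poly)
  qed
qed

section \<open>Two-by-two Hermitian matrices\<close>

(* Restricted to complex numbers, so that simp leaves scalings of vectors alone. *)
lemma scaleR_complex_eq: "r *\<^sub>R (z :: complex) = of_real r * z"
  by (rule scaleR_conv_of_real)

lemma smult_of_real: "complex_of_real r *s w = r *\<^sub>R w"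
  by (simp add: vec_eq_iff of_real_def)

lemma smult_scaleR: "(c :: complex) *s (r *\<^sub>R w) = r *\<^sub>R (c *s w)"
  by (simp add: vec_eq_iff)

lemma matrix_vector_mult_scaleR_complex: "(M :: complex^'n^'m) *v (r *\<^sub>R w) = r *\<^sub>R (M *v w)"
  by (simp add: vec_eq_iff matrix_vector_mult_def scaleR_sum_right)

lemma matrix_vector_mult_2: "((M :: 'a::semiring_1^2^2) *v w) $ i = M$i$1 * w$1 + M$i$2 * w$2"
  by (simp add: matrix_vector_mult_def sum_2)

lemma matrix_eq_2_iff: "(M :: 'a^2^2) = N \<longleftrightarrow> M$1$1 = N$1$1 \<and> M$1$2 = N$1$2 \<and> M$2$1 = N$2$1 \<and> M$2$2 = N$2$2"
  by (auto simp: vec_eq_iff forall_2)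

lemma vector_eq_2_iff: "(v :: 'a^2) = w \<longleftrightarrow> v$1 = w$1 \<and> v$2 = w$2"
  by (auto simp: vec_eq_iff forall_2)

lemma hermitian_mat_2:
  assumes "hermitian_mat M"
  shows "cnj (M$1$1) = M$1$1" "cnj (M$2$2) = M$2$2" "M$2$1 = cnj (M$1$2)"
  using assms unfolding hermitian_mat_def by metis+

lemma cnj_quad_form_hermitian:
  assumes "hermitian_mat M"
  shows "cnj (quad_form M w) = quad_form M w"
  using hermitian_mat_2 [OF assms]
  by (simp add: quad_form_def sum_2 matrix_vector_mult_2 algebra_simps)

lemma quad_form_eigenvector:
  assumes "M *v w = \<kappa> *s w"
  shows "quad_form M w = \<kappa> * of_real ((norm w)^2)"
proof -
  have "quad_form M w = \<kappa> * (\<Sum>i\<in>UNIV. of_real ((cmod (w$i))^2))"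
    by (simp add: quad_form_def assms sum_distrib_left mult_ac flip: of_real_power complex_norm_square)
  also have "(\<Sum>i\<in>UNIV. complex_of_real ((cmod (w$i))^2)) = of_real ((norm w)^2)"
    by (simp add: norm_vec_def L2_set_def sum_nonneg)
  finally show ?thesis .
qed

lemma hermitian_eigenvalue_real:
  assumes "hermitian_mat M" "w \<noteq> 0" "M *v w = \<kappa> *s w"
  shows "cnj \<kappa> = \<kappa>"
proof -
  have "cnj \<kappa> * of_real ((norm w)^2) = \<kappa> * of_real ((norm w)^2)"
    using cnj_quad_form_hermitian [OF assms(1), of w] quad_form_eigenvector [OF assms(3)] by simp
  then show ?thesis
    using assms(2) by simp
qed

lemma pos_def_eigenvalue:
  assumes "pos_def_mat M" "w \<noteq> 0" "M *v w = \<kappa> *s w"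
  shows "\<kappa> = of_real (Re \<kappa>)" and "Re \<kappa> > 0"
proof -
  show real: "\<kappa> = of_real (Re \<kappa>)"
    using hermitian_eigenvalue_real [OF _ assms(2,3)] assms(1)
    by (metis pos_def_mat_def Reals_cnj_iff complex_is_Real_iff of_real_Re)
  have "0 < Re (quad_form M w)"
    using assms unfolding pos_def_mat_def by blast
  also have "Re (quad_form M w) = Re \<kappa> * (norm w)^2"
    by (subst real) (simp add: quad_form_eigenvector [OF assms(3)])
  finally show "Re \<kappa> > 0"
    by (simp add: zero_less_mult_iff)
qed

lemma norm_square_2:
  fixes w :: "complex^2"
  shows "w$1 * cnj (w$1) + w$2 * cnj (w$2) = complex_of_real ((norm w)^2)"
  by (simp add: norm_vec_def L2_set_def sum_nonneg sum_2 flip: complex_norm_square)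

definition orth2 :: "complex^2 \<Rightarrow> complex^2" where
  "orth2 w = vector [- cnj (w$2), cnj (w$1)]"

lemma hermitian_orth2_eigenvector:
  assumes "hermitian_mat M" and "M *v w = \<kappa> *s w" and "cnj \<kappa> = \<kappa>"
  shows "M *v orth2 w = (M$1$1 + M$2$2 - \<kappa>) *s orth2 w"
proof -
  note M = hermitian_mat_2 [OF assms(1)]
  have "cnj (M$1$1 * w$1 + M$1$2 * w$2) = cnj (\<kappa> * w$1)"
       "cnj (M$2$1 * w$1 + M$2$2 * w$2) = cnj (\<kappa> * w$2)"
    using assms(2) by (simp_all add: vector_eq_2_iff matrix_vector_mult_2)
  then show ?thesis
    using M assms(3) by (simp add: vector_eq_2_iff matrix_vector_mult_2 orth2_def algebra_simps)
qed

lemma matrix_eq_if_eq_on_orth2: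
  fixes M N :: "complex^2^2"
  assumes "w \<noteq> 0" and "M *v w = N *v w" and "M *v orth2 w = N *v orth2 w"
  shows "M = N"
proof -
  have S: "w$1 * cnj (w$1) + w$2 * cnj (w$2) \<noteq> 0"
    using assms(1) by (simp add: norm_square_2)
  have "M$i$j = N$i$j" for i j
  proof -
    define a b where "a = M$i$1 - N$i$1" and "b = M$i$2 - N$i$2"
    have on_w: "a * w$1 + b * w$2 = 0"
      using arg_cong [OF assms(2), of "\<lambda>v. v$i"]
      by (simp add: matrix_vector_mult_2 a_def b_def algebra_simps)
    have on_orth: "- a * cnj (w$2) + b * cnj (w$1) = 0"
      using arg_cong [OF assms(3), of "\<lambda>v. v$i"]
      by (simp add: matrix_vector_mult_2 orth2_def a_def b_def algebra_simps)
    have "a * (w$1 * cnj (w$1) + w$2 * cnj (w$2)) = cnj (w$1) * (a * w$1 + b * w$2) - w$2 * (- a * cnj (w$2) + b * cnj (w$1))"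
         "b * (w$1 * cnj (w$1) + w$2 * cnj (w$2)) = cnj (w$2) * (a * w$1 + b * w$2) + w$1 * (- a * cnj (w$2) + b * cnj (w$1))"
      by (simp_all add: algebra_simps)
    then have "a = 0" "b = 0"
      using S on_w on_orth by simp_all
    then show ?thesis
      using exhaust_2 [of j] by (auto simp: a_def b_def)
  qed
  then show ?thesis
    by (simp add: vec_eq_iff)
qed

lemma hermitian_common_eigenvector_commute:
  assumes "hermitian_mat A" "hermitian_mat B"
    and "w \<noteq> 0" "A *v w = a *s w" "B *v w = b *s w"
  shows "A ** B = B ** A"
proof (rule matrix_eq_if_eq_on_orth2 [OF assms(3)])
  obtain a' b' where orth: "A *v orth2 w = a' *s orth2 w" "B *v orth2 w = b' *s orth2 w"
    using hermitian_orth2_eigenvector hermitian_eigenvalue_real assms by metis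
  show "(A ** B) *v w = (B ** A) *v w" "(A ** B) *v orth2 w = (B ** A) *v orth2 w"
    using assms(4,5) orth by (simp_all add: vector_scalar_commute vector_smult_assoc mult.commute
        flip: matrix_vector_mul_assoc)
qed

lemma eigenvector_2_exists: "\<exists>w \<kappa>. w \<noteq> 0 \<and> (M :: complex^2^2) *v w = \<kappa> *s w"
proof (cases "M$1$2 = 0")
  case True
  then have "M *v vector [0, 1] = M$2$2 *s vector [0, 1]"
    by (simp add: vector_eq_2_iff matrix_vector_mult_2)
  then show ?thesis
    by (metis vector_2(2) zero_index zero_neq_one)
next
  case False
  define T D where "T = M$1$1 + M$2$2" and "D = M$1$1 * M$2$2 - M$1$2 * M$2$1"
  define \<kappa> where "\<kappa> = (T + csqrt (T^2 - 4 * D)) / 2"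
  have "\<kappa>^2 - T * \<kappa> + D = 0"
  proof -
    have "csqrt (T^2 - 4 * D) * csqrt (T^2 - 4 * D) = T^2 - 4 * D"
      by (metis power2_csqrt power2_eq_square)
    moreover have "2 * \<kappa> = T + csqrt (T^2 - 4 * D)" unfolding \<kappa>_def by simp
    ultimately show ?thesis by algebra
  qed
  then have "M *v vector [M$1$2, \<kappa> - M$1$1] = \<kappa> *s vector [M$1$2, \<kappa> - M$1$1]"
    by (simp add: vector_eq_2_iff matrix_vector_mult_2 T_def D_def algebra_simps power2_eq_square)
  moreover have "vector [M$1$2, \<kappa> - M$1$1] \<noteq> (0 :: complex^2)"
    using False by (simp add: vector_eq_2_iff)
  ultimately show ?thesis
    by blast
qed

lemma null_vectors_parallel_2:
  fixes N :: "complex^2^2"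
  assumes "N \<noteq> 0" and "N *v w = 0" and "N *v z = 0"
  shows "w$1 * z$2 = w$2 * z$1"
proof -
  obtain i where row: "N$i$1 \<noteq> 0 \<or> N$i$2 \<noteq> 0"
    using assms(1) by (metis vector_eq_2_iff zero_index)
  have "N$i$1 * w$1 + N$i$2 * w$2 = 0" "N$i$1 * z$1 + N$i$2 * z$2 = 0"
    using assms(2,3) by (metis matrix_vector_mult_2 zero_index)+
  then have "N$i$1 * (w$1 * z$2 - w$2 * z$1) = 0" "N$i$2 * (w$1 * z$2 - w$2 * z$1) = 0"
    by algebra+
  then show ?thesis
    using row by auto
qed

lemma parallel_2_imp_multiple:
  fixes w z :: "complex^2"
  assumes "w \<noteq> 0" and "w$1 * z$2 = w$2 * z$1"
  shows "\<exists>c. z = c *s w"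
proof (cases "w$1 = 0")
  case True
  then have "w$2 \<noteq> 0"
    using assms(1) by (simp add: vector_eq_2_iff)
  then have "z = (z$2 / w$2) *s w"
    using assms(2) True by (simp add: vector_eq_2_iff)
  then show ?thesis ..
next
  case False
  then have "z = (z$1 / w$1) *s w"
    using assms(2) by (simp add: vector_eq_2_iff field_simps)
  then show ?thesis ..
qed

lemma commuting_common_eigenvector_2:
  fixes A B :: "complex^2^2"
  assumes "A ** B = B ** A"
  shows "\<exists>w a b. w \<noteq> 0 \<and> A *v w = a *s w \<and> B *v w = b *s w"
proof -
  obtain w b where w: "w \<noteq> 0" "B *v w = b *s w"
    using eigenvector_2_exists by blast
  show ?thesis
  proof (cases "\<forall>x. B *v x = b *s x")
    case True
    then show ?thesis
      using eigenvector_2_exists [of A] by blast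
  next
    case False
    \<comment> \<open>\<open>B\<close> is not scalar, so its \<open>b\<close>-eigenspace is a line, which \<open>A\<close> preserves.\<close>
    have mat: "mat b *v x = b *s x" for x :: "complex^2"
      by (simp add: vector_eq_2_iff matrix_vector_mult_2 mat_def)
    then have "B - mat b \<noteq> 0"
      using False by (auto simp: matrix_vector_mult_diff_rdistrib)
    have "B *v (A *v w) = A *v (B *v w)"
      using assms by (simp add: matrix_vector_mul_assoc)
    also have "\<dots> = b *s (A *v w)"
      using w(2) by (simp add: vector_scalar_commute)
    finally have "B *v (A *v w) = b *s (A *v w)" .
    then have "w$1 * (A *v w)$2 = w$2 * (A *v w)$1"
      using null_vectors_parallel_2 [OF \<open>B - mat b \<noteq> 0\<close>] w(2)
      by (simp add: matrix_vector_mult_diff_rdistrib mat)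
    then obtain a where "A *v w = a *s w"
      using parallel_2_imp_multiple [OF w(1)] by blast
    then show ?thesis
      using w by blast
  qed
qed

section \<open>Eigenfunctions of the operator built from Hermite functions\<close>

lemma H_op_scaleR_pair:
  fixes u v :: "complex^2" and f g :: "real \<Rightarrow> real"
  assumes f: "\<And>x. (f has_real_derivative f' x) (at x)" "\<And>x. (f' has_real_derivative f'' x) (at x)"
    and g: "\<And>x. (g has_real_derivative g' x) (at x)" "\<And>x. (g' has_real_derivative g'' x) (at x)"
  defines "\<Phi> \<equiv> \<lambda>x. f x *\<^sub>R u + g x *\<^sub>R v"
  shows "\<Phi> differentiable (at x)"
    and "(\<lambda>t. vector_derivative \<Phi> (at t)) differentiable (at x)"
    and "H_op A B \<Phi> x = B *v (- (f'' x *\<^sub>R u + g'' x *\<^sub>R v)) + complex_of_real (x^2) *s (A *v \<Phi> x)"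
proof -
  have combination: "((\<lambda>x. h x *\<^sub>R u + k x *\<^sub>R v) has_vector_derivative (h' x *\<^sub>R u + k' x *\<^sub>R v)) (at x)"
    if "\<And>x. (h has_real_derivative h' x) (at x)" "\<And>x. (k has_real_derivative k' x) (at x)"
    for h h' k k' :: "real \<Rightarrow> real" and x
    using that by (auto intro!: derivative_eq_intros simp: has_real_derivative_iff_has_vector_derivative)
  have first: "(\<lambda>t. vector_derivative \<Phi> (at t)) = (\<lambda>t. f' t *\<^sub>R u + g' t *\<^sub>R v)"
    unfolding \<Phi>_def using combination [OF f(1) g(1)] by (auto intro: vector_derivative_at)
  show "\<Phi> differentiable (at x)"
    unfolding \<Phi>_def using combination [OF f(1) g(1)] by (rule differentiableI_vector)
  show "(\<lambda>t. vector_derivative \<Phi> (at t)) differentiable (at x)"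
    unfolding first using combination [OF f(2) g(2)] by (rule differentiableI_vector)
  show "H_op A B \<Phi> x = B *v (- (f'' x *\<^sub>R u + g'' x *\<^sub>R v)) + complex_of_real (x^2) *s (A *v \<Phi> x)"
    unfolding H_op_def first vector_derivative_at [OF combination [OF f(2) g(2)]] ..
qed

definition hermite_pair :: "real \<Rightarrow> nat \<Rightarrow> complex^2 \<Rightarrow> real \<Rightarrow> nat \<Rightarrow> complex^2 \<Rightarrow> real \<Rightarrow> complex^2" where
  "hermite_pair \<alpha> n u \<beta> m v = (\<lambda>x. hermite_fn \<alpha> n x *\<^sub>R u + hermite_fn \<beta> m x *\<^sub>R v)"

(* (H\<^sub>A\<^sub>,\<^sub>B - \<mu>)(\<phi>\<^sup>\<alpha>\<^sub>n u) = \<phi>\<^sup>\<alpha>\<^sub>n (mode_coeff0 B \<alpha> n \<mu> u + x^2 mode_coeff2 A B \<alpha> u),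
   since -\<phi>\<^sup>\<alpha>\<^sub>n'' = ((2n+1) \<alpha> - \<alpha>^2 x^2) \<phi>\<^sup>\<alpha>\<^sub>n. *)

definition mode_coeff0 :: "complex^2^2 \<Rightarrow> real \<Rightarrow> nat \<Rightarrow> complex \<Rightarrow> complex^2 \<Rightarrow> complex^2" where
  "mode_coeff0 B \<alpha> n \<mu> u = ((2 * real n + 1) * \<alpha>) *\<^sub>R (B *v u) - \<mu> *s u"

definition mode_coeff2 :: "complex^2^2 \<Rightarrow> complex^2^2 \<Rightarrow> real \<Rightarrow> complex^2 \<Rightarrow> complex^2" where
  "mode_coeff2 A B \<alpha> u = A *v u - \<alpha>^2 *\<^sub>R (B *v u)"

lemma mode_coeff0_add: "mode_coeff0 B \<alpha> n \<mu> (u + v) = mode_coeff0 B \<alpha> n \<mu> u + mode_coeff0 B \<alpha> n \<mu> v"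
  by (simp add: mode_coeff0_def algebra_simps vector_add_ldistrib)

lemma mode_coeff2_add: "mode_coeff2 A B \<alpha> (u + v) = mode_coeff2 A B \<alpha> u + mode_coeff2 A B \<alpha> v"
  by (simp add: mode_coeff2_def algebra_simps)

lemma eigenfunction_H_hermite_pair_iff:
  assumes "\<alpha> > 0" "\<beta> > 0"
  shows "eigenfunction_H A B (hermite_pair \<alpha> n u \<beta> m v) \<longleftrightarrow>
    hermite_pair \<alpha> n u \<beta> m v \<noteq> (\<lambda>x. 0) \<and>
    (\<exists>\<mu>. \<forall>x. hermite_fn \<alpha> n x *\<^sub>R (mode_coeff0 B \<alpha> n \<mu> u + x^2 *\<^sub>R mode_coeff2 A B \<alpha> u)
            + hermite_fn \<beta> m x *\<^sub>R (mode_coeff0 B \<beta> m \<mu> v + x^2 *\<^sub>R mode_coeff2 A B \<beta> v) = 0)"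
proof -
  note H = H_op_scaleR_pair [OF has_real_derivative_hermite_fn has_real_derivative_hermite_fn_deriv [OF assms(1)]
                                has_real_derivative_hermite_fn has_real_derivative_hermite_fn_deriv [OF assms(2)],
                             where u = u and v = v, folded hermite_pair_def]
  have "H_op A B (hermite_pair \<alpha> n u \<beta> m v) x - \<mu> *s hermite_pair \<alpha> n u \<beta> m v x
     = hermite_fn \<alpha> n x *\<^sub>R (mode_coeff0 B \<alpha> n \<mu> u + x^2 *\<^sub>R mode_coeff2 A B \<alpha> u)
     + hermite_fn \<beta> m x *\<^sub>R (mode_coeff0 B \<beta> m \<mu> v + x^2 *\<^sub>R mode_coeff2 A B \<beta> v)"
    for \<mu> x
    unfolding H(3)
    unfolding smult_of_real hermite_pair_def mode_coeff0_def mode_coeff2_def vector_add_ldistrib smult_scaleR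
    by (simp add: matrix_vector_mult_scaleR_complex algebra_simps)
  then show ?thesis
    unfolding eigenfunction_H_def using H(1,2) by (metis right_minus_eq)
qed

lemma hermitian_diagonal_commute:
  assumes "hermitian_mat A" "hermitian_mat B" "A$1$2 = 0" "B$1$2 = 0"
  shows "A ** B = B ** A"
  using hermitian_mat_2 (3) [OF assms(1)] hermitian_mat_2 (3) [OF assms(2)] assms(3,4)
  by (simp add: matrix_eq_2_iff matrix_matrix_mult_def sum_2 mult.commute)

lemma hermitian_commute_if_mode_coeffs_vanish:
  assumes "hermitian_mat A" "hermitian_mat B" "\<alpha> > 0" "w \<noteq> 0"
    and "mode_coeff0 B \<alpha> n \<mu> w = 0" and "mode_coeff2 A B \<alpha> w = 0"
  shows "A ** B = B ** A"
proof (rule hermitian_common_eigenvector_commute [OF assms(1,2,4)])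
  define c where "c = (2 * real n + 1) * \<alpha>"
  have "c \<noteq> 0"
    using assms(3) by (simp add: c_def)
  have B: "B *v w = (\<mu> / of_real c) *s w"
    using \<open>c \<noteq> 0\<close> assms(5) unfolding mode_coeff0_def c_def [symmetric] smult_of_real [symmetric]
    by (simp add: vec_eq_iff field_simps)
  then show "B *v w = (\<mu> / of_real c) *s w" .
  show "A *v w = (of_real (\<alpha>^2) * (\<mu> / of_real c)) *s w"
    using assms(6) B unfolding mode_coeff2_def smult_of_real [symmetric] by (simp add: vec_eq_iff)
qed

lemma commute_if_first_column_mode_coeffs_vanish:
  assumes hA: "hermitian_mat A" and hB: "hermitian_mat B" and "\<alpha> > 0" "a \<noteq> 0"
    and "mode_coeff0 B \<alpha> n \<mu> (vector [a, 0]) $ 2 = 0" and "mode_coeff2 A B \<alpha> (vector [a, 0]) $ 2 = 0"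
  shows "A ** B = B ** A"
proof (rule hermitian_diagonal_commute [OF hA hB])
  have "(2 * real n + 1) * \<alpha> \<noteq> 0"
    using assms(3) by simp
  then have "B$2$1 = 0" "A$2$1 = 0"
    using assms(4-6) by (simp_all add: mode_coeff0_def mode_coeff2_def matrix_vector_mult_2)
  then show "A$1$2 = 0" "B$1$2 = 0"
    using hermitian_mat_2 (3) [OF hA] hermitian_mat_2 (3) [OF hB] by simp_all
qed

lemma commute_if_second_column_mode_coeffs_vanish:
  assumes hA: "hermitian_mat A" and hB: "hermitian_mat B" and "\<beta> > 0" "b \<noteq> 0"
    and "mode_coeff0 B \<beta> m \<mu> (vector [0, b]) $ 1 = 0" and "mode_coeff2 A B \<beta> (vector [0, b]) $ 1 = 0"
  shows "A ** B = B ** A"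
proof (rule hermitian_diagonal_commute [OF hA hB])
  have "(2 * real m + 1) * \<beta> \<noteq> 0"
    using assms(3) by simp
  then show "B$1$2 = 0" "A$1$2 = 0"
    using assms(4-6) by (simp_all add: mode_coeff0_def mode_coeff2_def matrix_vector_mult_2)
qed

lemma mode_coeff2_off_diagonal_iff:
  assumes "hermitian_mat A" "hermitian_mat B" "a \<noteq> 0" "b \<noteq> 0"
  shows "mode_coeff2 A B \<alpha> (vector [0, b]) $ 1 = 0 \<longleftrightarrow> mode_coeff2 A B \<alpha> (vector [a, 0]) $ 2 = 0"
proof -
  have "mode_coeff2 A B \<alpha> (vector [0, b]) $ 1 = (A$1$2 - of_real (\<alpha>^2) * B$1$2) * b"
       "mode_coeff2 A B \<alpha> (vector [a, 0]) $ 2 = (A$2$1 - of_real (\<alpha>^2) * B$2$1) * a"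
    by (simp_all add: mode_coeff2_def matrix_vector_mult_2 scaleR_complex_eq algebra_simps)
  moreover have "A$2$1 - of_real (\<alpha>^2) * B$2$1 = cnj (A$1$2 - of_real (\<alpha>^2) * B$1$2)"
    using hermitian_mat_2 (3) [OF assms(1)] hermitian_mat_2 (3) [OF assms(2)] by simp
  ultimately show ?thesis
    using assms(3,4) by (metis complex_cnj_zero_iff mult_eq_0_iff)
qed

lemma diagonal_hermite_same_scale_imp_commute:
  fixes A B :: "complex^2^2"
  assumes hA: "hermitian_mat A" and hB: "hermitian_mat B" and \<alpha>: "\<alpha> > 0" and "a \<noteq> 0" "b \<noteq> 0"
  defines "u \<equiv> vector [a, 0]" and "v \<equiv> vector [0, b]"
  assumes rel: "\<And>x. hermite_fn \<alpha> n x *\<^sub>R (mode_coeff0 B \<alpha> n \<mu> u + x^2 *\<^sub>R mode_coeff2 A B \<alpha> u)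
                   + hermite_fn \<alpha> m x *\<^sub>R (mode_coeff0 B \<alpha> m \<mu> v + x^2 *\<^sub>R mode_coeff2 A B \<alpha> v) = 0"
  shows "A ** B = B ** A"
proof -
  note from_u = commute_if_first_column_mode_coeffs_vanish [OF hA hB \<alpha> \<open>a \<noteq> 0\<close>, folded u_def]
  note from_v = commute_if_second_column_mode_coeffs_vanish [OF hA hB \<alpha> \<open>b \<noteq> 0\<close>, folded v_def]
  have off_diagonal: "mode_coeff2 A B \<alpha> v $ 1 = 0 \<longleftrightarrow> mode_coeff2 A B \<alpha> u $ 2 = 0"
    unfolding u_def v_def using mode_coeff2_off_diagonal_iff [OF hA hB \<open>a \<noteq> 0\<close> \<open>b \<noteq> 0\<close>] .
  consider "n = m" | "n < m" | "m < n"
    by linarith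
  then show ?thesis
  proof cases
    case 1
    have "mode_coeff0 B \<alpha> n \<mu> (u + v) = 0 \<and> mode_coeff2 A B \<alpha> (u + v) = 0"
      using rel 1 by (intro hermite_quadratic_multiple_eq_0 [OF \<alpha>])
        (simp add: mode_coeff0_add mode_coeff2_add algebra_simps)
    moreover have "u + v \<noteq> 0"
      using \<open>a \<noteq> 0\<close> by (simp add: u_def v_def vector_eq_2_iff)
    ultimately show ?thesis
      using hermitian_commute_if_mode_coeffs_vanish [OF hA hB \<alpha>] by blast
  next
    case 2
    note lower = hermite_quadratic_multiples_lower_index [OF \<alpha> 2 rel]
    have "mode_coeff2 A B \<alpha> u $ 2 = 0"
      using lower(1) off_diagonal by simp
    then show ?thesis
      using lower(2) from_u by blast
  next
    case 3
    have rel': "hermite_fn \<alpha> m x *\<^sub>R (mode_coeff0 B \<alpha> m \<mu> v + x^2 *\<^sub>R mode_coeff2 A B \<alpha> v)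
        + hermite_fn \<alpha> n x *\<^sub>R (mode_coeff0 B \<alpha> n \<mu> u + x^2 *\<^sub>R mode_coeff2 A B \<alpha> u) = 0" for x
      using rel [of x] by (simp add: add.commute)
    note lower = hermite_quadratic_multiples_lower_index [OF \<alpha> 3 rel']
    have "mode_coeff2 A B \<alpha> v $ 1 = 0"
      using lower(1) off_diagonal by simp
    then show ?thesis
      using lower(2) from_v by blast
  qed
qed

lemma diagonal_hermite_eigenfunction_imp_commute:
  fixes A B :: "complex^2^2"
  assumes hA: "hermitian_mat A" and hB: "hermitian_mat B" and nz: "a \<noteq> 0 \<or> b \<noteq> 0"
    and \<alpha>: "\<alpha> > 0" and \<beta>: "\<beta> > 0"
    and eig: "eigenfunction_H A B (hermite_pair \<alpha> n (vector [a, 0]) \<beta> m (vector [0, b]))"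
  shows "A ** B = B ** A"
proof -
  define u v :: "complex^2" where "u = vector [a, 0]" and "v = vector [0, b]"
  obtain \<mu> where rel:
    "\<And>x. hermite_fn \<alpha> n x *\<^sub>R (mode_coeff0 B \<alpha> n \<mu> u + x^2 *\<^sub>R mode_coeff2 A B \<alpha> u)
        + hermite_fn \<beta> m x *\<^sub>R (mode_coeff0 B \<beta> m \<mu> v + x^2 *\<^sub>R mode_coeff2 A B \<beta> v) = 0"
    using eig eigenfunction_H_hermite_pair_iff [OF \<alpha> \<beta>] unfolding u_def v_def by blast
  have from_u: "A ** B = B ** A" if "a \<noteq> 0" "mode_coeff0 B \<alpha> n \<mu> u = 0" "mode_coeff2 A B \<alpha> u = 0"
    using commute_if_first_column_mode_coeffs_vanish [OF hA hB \<alpha> \<open>a \<noteq> 0\<close>, where n = n and \<mu> = \<mu>] that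
    unfolding u_def by simp
  have from_v: "A ** B = B ** A" if "b \<noteq> 0" "mode_coeff0 B \<beta> m \<mu> v = 0" "mode_coeff2 A B \<beta> v = 0"
    using commute_if_second_column_mode_coeffs_vanish [OF hA hB \<beta> \<open>b \<noteq> 0\<close>, where m = m and \<mu> = \<mu>] that
    unfolding v_def by simp
  consider "a = 0" | "b = 0" | "a \<noteq> 0" "b \<noteq> 0" "\<alpha> \<noteq> \<beta>" | "a \<noteq> 0" "b \<noteq> 0" "\<alpha> = \<beta>"
    by blast
  then show ?thesis
  proof cases
    case 1
    then have "u = 0"
      by (simp add: u_def vector_eq_2_iff)
    then have "mode_coeff0 B \<beta> m \<mu> v = 0 \<and> mode_coeff2 A B \<beta> v = 0"
      using rel by (intro hermite_quadratic_multiple_eq_0 [OF \<beta>]) (simp add: mode_coeff0_def mode_coeff2_def)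
    then show ?thesis
      using from_v nz 1 by simp
  next
    case 2
    then have "v = 0"
      by (simp add: v_def vector_eq_2_iff)
    then have "mode_coeff0 B \<alpha> n \<mu> u = 0 \<and> mode_coeff2 A B \<alpha> u = 0"
      using rel by (intro hermite_quadratic_multiple_eq_0 [OF \<alpha>]) (simp add: mode_coeff0_def mode_coeff2_def)
    then show ?thesis
      using from_u nz 2 by simp
  next
    case 3
    then show ?thesis
      using hermite_quadratic_multiples_distinct_scales [OF \<alpha> \<beta> _ rel] from_v by simp
  next
    case 4
    then have "hermite_fn \<alpha> n x *\<^sub>R (mode_coeff0 B \<alpha> n \<mu> u + x^2 *\<^sub>R mode_coeff2 A B \<alpha> u)
        + hermite_fn \<alpha> m x *\<^sub>R (mode_coeff0 B \<alpha> m \<mu> v + x^2 *\<^sub>R mode_coeff2 A B \<alpha> v) = 0" for x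
      using rel [of x] by simp
    then show ?thesis
      using diagonal_hermite_same_scale_imp_commute [OF hA hB \<alpha> \<open>a \<noteq> 0\<close> \<open>b \<noteq> 0\<close>]
      unfolding u_def v_def by blast
  qed
qed

lemma commute_imp_hermite_ground_state:
  fixes A B :: "complex^2^2"
  assumes pA: "pos_def_mat A" and pB: "pos_def_mat B" and "A ** B = B ** A"
  shows "\<exists>a b \<alpha>. (a \<noteq> 0 \<or> b \<noteq> 0) \<and> \<alpha> > 0 \<and>
           eigenfunction_H A B (hermite_pair \<alpha> 0 (vector [a, 0]) \<alpha> 0 (vector [0, b]))"
proof -
  obtain w a b where w: "w \<noteq> 0" "A *v w = a *s w" "B *v w = b *s w"
    using commuting_common_eigenvector_2 [OF assms(3)] by blast
  obtain la lb where A: "A *v w = la *\<^sub>R w" and B: "B *v w = lb *\<^sub>R w" and "la > 0" "lb > 0"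
    using w pos_def_eigenvalue [OF pA w(1,2)] pos_def_eigenvalue [OF pB w(1,3)] by (metis smult_of_real)
  define \<alpha> where "\<alpha> = sqrt (la / lb)"
  have \<alpha>: "\<alpha> > 0" and "la = \<alpha>^2 * lb"
    using \<open>la > 0\<close> \<open>lb > 0\<close> by (simp_all add: \<alpha>_def)
  define u v :: "complex^2" where "u = vector [w$1, 0]" and "v = vector [0, w$2]"
  have "u + v = w"
    by (simp add: u_def v_def vector_eq_2_iff)
  have "hermite_pair \<alpha> 0 u \<alpha> 0 v 0 = hermite_norm \<alpha> 0 *\<^sub>R w"
    using \<open>u + v = w\<close> by (simp add: hermite_pair_def hermite_fn_eq flip: scaleR_add_right)
  then have "hermite_pair \<alpha> 0 u \<alpha> 0 v \<noteq> (\<lambda>x. 0)"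
    using w(1) hermite_norm_pos [OF \<alpha>, of 0] by (metis less_irrefl scaleR_eq_0_iff)
  moreover have "mode_coeff0 B \<alpha> 0 (of_real (\<alpha> * lb)) w = 0" "mode_coeff2 A B \<alpha> w = 0"
    unfolding mode_coeff0_def mode_coeff2_def smult_of_real using A B \<open>la = \<alpha>^2 * lb\<close>
    by (simp_all add: algebra_simps)
  then have "hermite_fn \<alpha> 0 x *\<^sub>R (mode_coeff0 B \<alpha> 0 (of_real (\<alpha> * lb)) u + x^2 *\<^sub>R mode_coeff2 A B \<alpha> u)
      + hermite_fn \<alpha> 0 x *\<^sub>R (mode_coeff0 B \<alpha> 0 (of_real (\<alpha> * lb)) v + x^2 *\<^sub>R mode_coeff2 A B \<alpha> v) = 0" for x
    unfolding \<open>u + v = w\<close> [symmetric] mode_coeff0_add mode_coeff2_add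
    by (simp add: algebra_simps flip: scaleR_add_right)
  ultimately have "eigenfunction_H A B (hermite_pair \<alpha> 0 u \<alpha> 0 v)"
    unfolding eigenfunction_H_hermite_pair_iff [OF \<alpha> \<alpha>] by blast
  moreover have "w$1 \<noteq> 0 \<or> w$2 \<noteq> 0"
    using w(1) by (simp add: vector_eq_2_iff)
  ultimately show ?thesis
    using \<alpha> unfolding u_def v_def by blast
qed

lemma hermite_01_eigenfunction_imp_commute:
  fixes A B :: "complex^2^2"
  assumes hA: "hermitian_mat A" and hB: "hermitian_mat B" and \<alpha>: "\<alpha> > 0"
    and eig: "eigenfunction_H A B (hermite_pair \<alpha> 0 v0 \<alpha> 1 v1)"
  shows "A ** B = B ** A"
proof -
  obtain \<mu> where rel:
    "\<And>x. hermite_fn \<alpha> 0 x *\<^sub>R (mode_coeff0 B \<alpha> 0 \<mu> v0 + x^2 *\<^sub>R mode_coeff2 A B \<alpha> v0)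
        + hermite_fn \<alpha> 1 x *\<^sub>R (mode_coeff0 B \<alpha> 1 \<mu> v1 + x^2 *\<^sub>R mode_coeff2 A B \<alpha> v1) = 0"
    using eig eigenfunction_H_hermite_pair_iff [OF \<alpha> \<alpha>] by blast
  \<comment> \<open>The degrees 0 and 1 differ by less than 2, so both \<open>x^2\<close>-coefficients vanish.\<close>
  note lower = hermite_quadratic_multiples_lower_index [OF \<alpha> _ rel, simplified]
  have "mode_coeff2 A B \<alpha> v0 = 0" "mode_coeff2 A B \<alpha> v1 = 0"
    using lower(1,3) by auto
  then have "mode_coeff0 B \<alpha> 0 \<mu> v0 = 0" "mode_coeff0 B \<alpha> 1 \<mu> v1 = 0"
    using lower(2) by (simp_all add: vec_eq_iff)
  moreover have "v0 \<noteq> 0 \<or> v1 \<noteq> 0"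
    using eig by (auto simp: eigenfunction_H_def hermite_pair_def)
  ultimately show ?thesis
    using hermitian_commute_if_mode_coeffs_vanish [OF hA hB \<alpha>] \<open>mode_coeff2 A B \<alpha> v0 = 0\<close>
      \<open>mode_coeff2 A B \<alpha> v1 = 0\<close> by blast
qed

theorem lemma3p1:
  fixes A B :: "complex^2^2"
  assumes "pos_def_mat A" and "pos_def_mat B"
  shows "((\<exists>a b :: complex. \<exists>\<alpha> \<beta> :: real. \<exists>n m :: nat.
             (a \<noteq> 0 \<or> b \<noteq> 0) \<and> \<alpha> > 0 \<and> \<beta> > 0 \<and>
             eigenfunction_H A B
               (\<lambda>x. vector [a * complex_of_real (hermite_fn \<alpha> n x),
                             b * complex_of_real (hermite_fn \<beta> m x)]))
          \<longleftrightarrow> A ** B = B ** A)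
     \<and> (A ** B \<noteq> B ** A \<longrightarrow>
          (\<forall>(v0::complex^2) (v1::complex^2) (\<alpha>::real). \<alpha> > 0 \<longrightarrow>
             (\<lambda>x. complex_of_real (hermite_fn \<alpha> 0 x) *s v0
                 + complex_of_real (hermite_fn \<alpha> 1 x) *s v1) \<noteq> (\<lambda>x. 0) \<longrightarrow>
             \<not> eigenfunction_H A B
                 (\<lambda>x. complex_of_real (hermite_fn \<alpha> 0 x) *s v0
                     + complex_of_real (hermite_fn \<alpha> 1 x) *s v1)))"
proof -
  have hA: "hermitian_mat A" and hB: "hermitian_mat B"
    using assms unfolding pos_def_mat_def by auto
  have diagonal: "(\<lambda>x. vector [a * complex_of_real (hermite_fn \<alpha> n x), b * complex_of_real (hermite_fn \<beta> m x)])
      = hermite_pair \<alpha> n (vector [a, 0]) \<beta> m (vector [0, b])" for a b \<alpha> \<beta> n m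
    by (simp add: fun_eq_iff hermite_pair_def vector_eq_2_iff scaleR_complex_eq mult.commute)
  have low_modes: "(\<lambda>x. complex_of_real (hermite_fn \<alpha> 0 x) *s v0 + complex_of_real (hermite_fn \<alpha> 1 x) *s v1)
      = hermite_pair \<alpha> 0 v0 \<alpha> 1 v1" for \<alpha> v0 v1
    by (simp add: hermite_pair_def smult_of_real)
  show ?thesis
    unfolding diagonal low_modes
    using diagonal_hermite_eigenfunction_imp_commute [OF hA hB] commute_imp_hermite_ground_state [OF assms]
      hermite_01_eigenfunction_imp_commute [OF hA hB]
    by blast
qed

end
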